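(* Let $\sigma^2>0$, $a>1$, let $Z_i$ be i.i.d. $\mathcal{N}(0,\sigma^2)$, $U_0=0$, $U_i=aU_{i-1}+Z_i$, $\hat a_{\mathrm{ML}}(u_1^n)=\frac{\sum_{i=1}^{n-1}u_iu_{i+1}}{\sum_{i=1}^{n-1}u_i^2}$, $P^+(n,a,\eta)=-\frac1n\log\mathbb{P}[\hat a_{\mathrm{ML}}(U_1^n)-a>\eta]$ and $P^-(n,a,\eta)=-\frac1n\log\mathbb{P}[\hat a_{\mathrm{ML}}(U_1^n)-a<-\eta]$. Let $(\eta_n)$ be a positive sequence with $\eta_n=\omega(1/\sqrt n)$, i.e. $\sqrt n\,\eta_n\to\infty$. For each $n$ and $s>0$ define $\alpha_{n,1}=\beta_{n,1}=\frac{\sigma^2s^2-2\eta_ns}{2}$, and for $\ell=2,\ldots,n$, $\alpha_{n,\ell}=\frac{[a^2+2\sigma^2s(a+\eta_n)]\alpha_{n,\ell-1}+\alpha_{n,1}}{1-2\sigma^2\alpha_{n,\ell-1}}$, $\beta_{n,\ell}=\frac{[a^2+2\sigma^2s(-a+\eta_n)]\beta_{n,\ell-1}+\beta_{n,1}}{1-2\sigma^2\beta_{n,\ell-1}}$, and let $\mathcal{S}_n^+=\{s>0:\alpha_{n,\ell}<\frac1{2\sigma^2}\ \forall\ell\in\{1,\ldots,n\}\}$, $\mathcal{S}_n^-=\{s>0:\beta_{n,\ell}<\frac1{2\sigma^2}\ \forall\ell\in\{1,\ldots,n\}\}$. Then for every $n\ge2$, $$P^+(n,a,\eta_n)\ge\sup_{s\in\mathcal{S}_n^+}\frac1{2n}\sum_{\ell=1}^{n-1}\log(1-2\sigma^2\alpha_{n,\ell}),\qquad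 P^-(n,a,\eta_n)\ge\sup_{s\in\mathcal{S}_n^-}\frac1{2n}\sum_{\ell=1}^{n-1}\log(1-2\sigma^2\beta_{n,\ell}),$$ and moreover $$\liminf_{n\to\infty}P^+(n,a,\eta_n)\ge\log a,\qquad \liminf_{n\to\infty}P^-(n,a,\eta_n)\ge\log a.$$
   Context: Logarithms are natural. *)

theory Defs
  imports "HOL-Probability.Probability"
begin

fun ar_proc :: "real \<Rightarrow> (nat \<Rightarrow> 'w \<Rightarrow> real) \<Rightarrow> nat \<Rightarrow> 'w \<Rightarrow> real" where
  "ar_proc a Z 0 w = 0"
| "ar_proc a Z (Suc i) w = a * ar_proc a Z i w + Z (Suc i) w"

definition a_ml :: "nat \<Rightarrow> (nat \<Rightarrow> real) \<Rightarrow> real" where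
  "a_ml n u = (\<Sum>i=1..n-1. u i * u (i+1)) / (\<Sum>i=1..n-1. (u i)^2)"

definition P_plus :: "'w measure \<Rightarrow> (nat \<Rightarrow> 'w \<Rightarrow> real) \<Rightarrow> nat \<Rightarrow> real \<Rightarrow> real \<Rightarrow> real" where
  "P_plus M Z n a \<eta> = - (1 / real n) *
     ln (measure M {w \<in> space M. a_ml n (\<lambda>i. ar_proc a Z i w) - a > \<eta>})"

definition P_minus :: "'w measure \<Rightarrow> (nat \<Rightarrow> 'w \<Rightarrow> real) \<Rightarrow> nat \<Rightarrow> real \<Rightarrow> real \<Rightarrow> real" where
  "P_minus M Z n a \<eta> = - (1 / real n) *
     ln (measure M {w \<in> space M. a_ml n (\<lambda>i. ar_proc a Z i w) - a < - \<eta>})"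

fun rec_seq :: "real \<Rightarrow> real \<Rightarrow> real \<Rightarrow> real \<Rightarrow> real \<Rightarrow> nat \<Rightarrow> real" where
  "rec_seq a b \<sigma> \<eta> s 0 = (\<sigma>^2 * s^2 - 2 * \<eta> * s) / 2"
| "rec_seq a b \<sigma> \<eta> s (Suc k) =
     ((a^2 + 2 * \<sigma>^2 * s * (b + \<eta>)) * rec_seq a b \<sigma> \<eta> s k + rec_seq a b \<sigma> \<eta> s 0)
     / (1 - 2 * \<sigma>^2 * rec_seq a b \<sigma> \<eta> s k)"

definition alpha :: "real \<Rightarrow> real \<Rightarrow> real \<Rightarrow> real \<Rightarrow> nat \<Rightarrow> real" where
  "alpha a \<sigma> \<eta> s l = rec_seq a a \<sigma> \<eta> s (l - 1)"

definition beta :: "real \<Rightarrow> real \<Rightarrow> real \<Rightarrow> real \<Rightarrow> nat \<Rightarrow> real" where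
  "beta a \<sigma> \<eta> s l = rec_seq a (- a) \<sigma> \<eta> s (l - 1)"

end

theory Submission
  imports Defs "HOL-Real_Asymp.Real_Asymp"
begin

(*
  Chernoff bound with a quadratic exponent.  Write U_i for the AR(1) path and
  epsilon = 1 (for P_plus) or epsilon = -1 (for P_minus).  On the deviation event
  epsilon (a_ml - a) > eta one has, for every s > 0,
    s (epsilon sum U_i U_(i+1) - (epsilon a + eta) sum U_i^2) >= 0,
  so the probability is at most the expectation of the exponential of this quadratic
  form.  The noises are integrated out one at a time, the last one first: each step is a
  Gaussian integral of exp (beta y + gamma y^2), which contributes the factor
  (1 - 2 sigma^2 gamma)^(-1/2) and turns the coefficient gamma of the last U^2 into a
  Riccati-type update of it.  The successive coefficients are alpha_(n,l) resp. beta_(n,l).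

  For the limit take s = min eta_n theta / sigma^2.  Then x_l = -2 sigma^2 alpha_(n,l)
  follows the iteration x -> (A x + d) / (1 + x) with A >= a^2 - 2 a theta and d >= 1/n,
  so after O(log n) steps x_l >= 1 / (theta + 1 / (a^2 - 2 a theta - 1)).  The bound is
  therefore at least half the logarithm of 1 plus that quantity, up to o(1), and this
  tends to ln a as theta -> 0.
*)

fun ar_seq :: "real \<Rightarrow> (nat \<Rightarrow> real) \<Rightarrow> nat \<Rightarrow> real" where
  "ar_seq a x 0 = 0"
| "ar_seq a x (Suc i) = a * ar_seq a x i + x (Suc i)"

lemma ar_proc_eq_ar_seq: "ar_proc a Z i w = ar_seq a (\<lambda>j. Z j w) i"
  by (induction i) auto

lemma ar_seq_cong: "(\<And>j. j \<in> {1..i} \<Longrightarrow> x j = y j) \<Longrightarrow> ar_seq a x i = ar_seq a y i"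
  by (induction i) auto

lemma borel_measurable_ar_seq[measurable]:
  assumes "sets N = sets borel" and "i \<le> k"
  shows "(\<lambda>x. ar_seq a x i) \<in> borel_measurable (PiM {1..k} (\<lambda>_. N))"
  using \<open>i \<le> k\<close>
proof (induction i)
  case (Suc i)
  then show ?case
    using measurable_component_singleton[of "Suc i" "{1..k}" "\<lambda>_. N"] assms(1) by simp
qed simp

lemma a_ml_ar_proc: "a_ml n (\<lambda>i. ar_proc a Z i w) = a_ml n (ar_seq a (\<lambda>i\<in>{1..n}. Z i w))"
proof -
  have "ar_proc a Z i w = ar_seq a (\<lambda>i\<in>{1..n}. Z i w) i" if "i \<le> n" for i
    unfolding ar_proc_eq_ar_seq using that by (intro ar_seq_cong) auto
  then show ?thesis
    unfolding a_ml_def by (intro arg_cong2[where f = "(/)"] sum.cong) auto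
qed

lemma a_ml_ar_seq_minus_eq:
  assumes "(\<Sum>i=1..n-1. (ar_seq a x i)^2) \<noteq> 0"
  shows "a_ml n (ar_seq a x) - a
       = (\<Sum>i=1..n-1. ar_seq a x i * x (i + 1)) / (\<Sum>i=1..n-1. (ar_seq a x i)^2)"
proof -
  have "(\<Sum>i=1..n-1. ar_seq a x i * ar_seq a x (i + 1))
      = a * (\<Sum>i=1..n-1. (ar_seq a x i)^2) + (\<Sum>i=1..n-1. ar_seq a x i * x (i + 1))"
    by (simp add: sum_distrib_left sum.distrib[symmetric] power2_eq_square algebra_simps)
  then show ?thesis
    using assms by (simp add: a_ml_def field_simps)
qed

lemma borel_measurable_a_ml_ar_seq[measurable]:
  assumes "sets N = sets borel"
  shows "(\<lambda>x. a_ml n (ar_seq a x)) \<in> borel_measurable (PiM {1..n} (\<lambda>_. N))"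
  unfolding a_ml_def
  by (intro borel_measurable_divide borel_measurable_sum borel_measurable_times borel_measurable_power
      borel_measurable_ar_seq[OF assms]) auto

section \<open>Chernoff bound by iterated Gaussian integration\<close>

definition normal_measure :: "real \<Rightarrow> real measure" where
  "normal_measure \<sigma> = density lborel (\<lambda>x. ennreal (normal_density 0 \<sigma> x))"

lemma sets_normal_measure[simp, measurable_cong]: "sets (normal_measure \<sigma>) = sets borel"
  by (simp add: normal_measure_def)

lemma space_normal_measure[simp]: "space (normal_measure \<sigma>) = UNIV"
  by (simp add: normal_measure_def)

lemma prob_space_normal_measure: "\<sigma> > 0 \<Longrightarrow> prob_space (normal_measure \<sigma>)"
  unfolding normal_measure_def by (rule prob_space_normal_density)

lemma emeasure_normal_measure_Icc_pos:
  assumes "\<sigma> > 0" and "l < h"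
  shows "0 < emeasure (normal_measure \<sigma>) {l..h}"
proof -
  have nonzero: "ennreal (normal_density 0 \<sigma> x) \<noteq> 0" for x
    using normal_density_pos[OF \<open>\<sigma> > 0\<close>, of 0 x] by simp
  have "{l..h} \<notin> null_sets (normal_measure \<sigma>)"
  proof
    assume "{l..h} \<in> null_sets (normal_measure \<sigma>)"
    then have "AE x in lborel. x \<in> {l..h} \<longrightarrow> ennreal (normal_density 0 \<sigma> x) = 0"
      unfolding normal_measure_def by (subst (asm) null_sets_density_iff) auto
    then have "AE x in lborel. x \<notin> {l..h}"
      by (rule AE_mp) (use nonzero in \<open>auto intro!: AE_I2\<close>)
    then have "{l..h} \<in> null_sets lborel"
      by (subst AE_iff_null_sets) auto
    then show False
      using \<open>l < h\<close> by (auto simp: null_sets_def)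
  qed
  then show ?thesis
    by (auto simp: null_sets_def zero_less_iff_neq_zero)
qed

lemma product_sigma_finite_normal_measure: "\<sigma> > 0 \<Longrightarrow> product_sigma_finite (\<lambda>_. normal_measure \<sigma>)"
  unfolding product_sigma_finite_def
  by (auto intro: prob_space_imp_sigma_finite prob_space_normal_measure)

lemma normal_density_mult_exp_quadratic:
  fixes \<sigma> \<beta> \<gamma> y :: real
  assumes "\<sigma> > 0" and "2 * \<sigma>^2 * \<gamma> < 1"
  defines "r \<equiv> 1 - 2 * \<sigma>^2 * \<gamma>"
  defines "\<tau> \<equiv> \<sigma> / sqrt r" and "\<mu> \<equiv> \<beta> * \<sigma>^2 / r"
  shows "normal_density 0 \<sigma> y * exp (\<beta> * y + \<gamma> * y^2)
       = exp (\<sigma>^2 * \<beta>^2 / (2 * r)) / sqrt r * normal_density \<mu> \<tau> y"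
proof -
  have "r > 0"
    using assms by (simp add: r_def)
  have \<tau>: "\<tau>^2 = \<sigma>^2 / r"
    using \<open>r > 0\<close> by (simp add: \<tau>_def power_divide)
  have \<gamma>: "\<gamma> = (1 - r) / (2 * \<sigma>^2)"
    using assms by (simp add: r_def)
  have "- (y^2) / (2 * \<sigma>^2) + (\<beta> * y + \<gamma> * y^2) = (2*\<beta>*y*\<sigma>^2*r - y^2*r^2) / (2 * \<sigma>^2 * r)"
    unfolding \<gamma> using \<open>r > 0\<close> \<open>\<sigma> > 0\<close> by (simp add: field_simps power2_eq_square less_imp_neq[symmetric])
  moreover have "- ((y - \<mu>)^2) / (2 * \<tau>^2) + \<sigma>^2 * \<beta>^2 / (2 * r) = (2*\<beta>*y*\<sigma>^2*r - y^2*r^2) / (2 * \<sigma>^2 * r)"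
    unfolding \<tau> \<mu>_def using \<open>r > 0\<close> \<open>\<sigma> > 0\<close> by (simp add: field_simps power2_eq_square less_imp_neq[symmetric])
  ultimately have exponent: "- (y^2) / (2 * \<sigma>^2) + (\<beta> * y + \<gamma> * y^2)
      = - ((y - \<mu>)^2) / (2 * \<tau>^2) + \<sigma>^2 * \<beta>^2 / (2 * r)"
    by simp
  have sqrt_eq: "sqrt (2 * pi * \<tau>^2) = sqrt (2 * pi * \<sigma>^2) / sqrt r"
    using \<open>r > 0\<close> by (simp add: \<tau> real_sqrt_divide)
  have "normal_density 0 \<sigma> y * exp (\<beta> * y + \<gamma> * y^2)
      = 1 / sqrt (2 * pi * \<sigma>^2) * exp (- (y^2) / (2 * \<sigma>^2) + (\<beta> * y + \<gamma> * y^2))"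
    unfolding normal_density_def exp_add[of "- (y^2) / (2 * \<sigma>^2)"] by simp
  also have "\<dots> = 1 / sqrt (2 * pi * \<sigma>^2) * exp (- ((y - \<mu>)^2) / (2 * \<tau>^2)) * exp (\<sigma>^2 * \<beta>^2 / (2 * r))"
    by (simp only: exponent exp_add)
  also have "\<dots> = exp (\<sigma>^2 * \<beta>^2 / (2 * r)) / sqrt r * normal_density \<mu> \<tau> y"
    unfolding normal_density_def sqrt_eq using \<open>r > 0\<close> \<open>\<sigma> > 0\<close> by (simp add: field_simps)
  finally show ?thesis .
qed

lemma nn_integral_normal_exp_quadratic:
  fixes \<sigma> \<beta> \<gamma> :: real
  assumes "\<sigma> > 0" and "2 * \<sigma>^2 * \<gamma> < 1"
  defines "r \<equiv> 1 - 2 * \<sigma>^2 * \<gamma>"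
  shows "(\<integral>\<^sup>+ y. ennreal (exp (\<beta> * y + \<gamma> * y^2)) \<partial>normal_measure \<sigma>)
       = ennreal (exp (\<sigma>^2 * \<beta>^2 / (2 * r)) / sqrt r)"
proof -
  define K where "K = exp (\<sigma>^2 * \<beta>^2 / (2 * r)) / sqrt r"
  have "r > 0" "K \<ge> 0"
    using assms by (simp_all add: r_def K_def)
  have "(\<integral>\<^sup>+ y. ennreal (exp (\<beta> * y + \<gamma> * y^2)) \<partial>normal_measure \<sigma>)
      = (\<integral>\<^sup>+ y. ennreal (normal_density 0 \<sigma> y * exp (\<beta> * y + \<gamma> * y^2)) \<partial>lborel)"
    unfolding normal_measure_def by (subst nn_integral_density) (auto simp: ennreal_mult)
  also have "\<dots> = (\<integral>\<^sup>+ y. ennreal K * ennreal (normal_density (\<beta> * \<sigma>^2 / r) (\<sigma> / sqrt r) y) \<partial>lborel)"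
    using normal_density_mult_exp_quadratic[OF assms(1,2)] \<open>K \<ge> 0\<close>
    by (intro nn_integral_cong) (simp add: K_def r_def ennreal_mult[symmetric])
  also have "\<dots> = ennreal K * (\<integral>\<^sup>+ y. ennreal (normal_density (\<beta> * \<sigma>^2 / r) (\<sigma> / sqrt r) y) \<partial>lborel)"
    by (rule nn_integral_cmult) auto
  also have "(\<integral>\<^sup>+ y. ennreal (normal_density (\<beta> * \<sigma>^2 / r) (\<sigma> / sqrt r) y) \<partial>lborel) = 1"
    using \<open>r > 0\<close> \<open>\<sigma> > 0\<close> by (subst nn_integral_eq_integral) auto
  finally show ?thesis
    by (simp add: K_def)
qed

definition ar_quad_form :: "real \<Rightarrow> real \<Rightarrow> real \<Rightarrow> real \<Rightarrow> (nat \<Rightarrow> real) \<Rightarrow> nat \<Rightarrow> real" where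
  "ar_quad_form a p q \<gamma> x k =
     (\<Sum>i<k. p * ar_seq a x i * ar_seq a x (Suc i) + q * (ar_seq a x i)^2) + \<gamma> * (ar_seq a x k)^2"

text \<open>The coefficient of the last squared term that remains after integrating out the noise
  of the last step (see \<open>nn_integral_exp_ar_quad_form_last\<close>).\<close>

definition riccati_step :: "real \<Rightarrow> real \<Rightarrow> real \<Rightarrow> real \<Rightarrow> real \<Rightarrow> real" where
  "riccati_step \<sigma> a p q \<gamma> = \<gamma> * a^2 + p * a + q + \<sigma>^2 * (2 * \<gamma> * a + p)^2 / (2 * (1 - 2 * \<sigma>^2 * \<gamma>))"

lemma borel_measurable_ar_quad_form[measurable]:
  "k \<le> n \<Longrightarrow> (\<lambda>x. ar_quad_form a p q \<gamma> x k) \<in> borel_measurable (PiM {1..n} (\<lambda>_. normal_measure \<sigma>))"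
  unfolding ar_quad_form_def by measurable

lemma ar_quad_form_fun_upd_Suc:
  "ar_quad_form a p q \<gamma> (x(Suc k := y)) (Suc k)
     = ar_quad_form a p q 0 x k + (\<gamma> * a^2 + p * a + q) * (ar_seq a x k)^2
       + ((2 * \<gamma> * a + p) * ar_seq a x k * y + \<gamma> * y^2)"
proof -
  have "ar_seq a (x(Suc k := y)) i = ar_seq a x i" if "i \<le> k" for i
    using that by (intro ar_seq_cong) auto
  then show ?thesis
    by (simp add: ar_quad_form_def power2_eq_square algebra_simps)
qed

lemma nn_integral_exp_ar_quad_form_last:
  assumes "\<sigma> > 0" and "2 * \<sigma>^2 * \<gamma> < 1"
  shows "(\<integral>\<^sup>+ y. ennreal (exp (ar_quad_form a p q \<gamma> (x(Suc k := y)) (Suc k))) \<partial>normal_measure \<sigma>)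
       = ennreal (1 / sqrt (1 - 2 * \<sigma>^2 * \<gamma>)) * ennreal (exp (ar_quad_form a p q (riccati_step \<sigma> a p q \<gamma>) x k))"
proof -
  define r where "r = 1 - 2 * \<sigma>^2 * \<gamma>"
  define A where "A = ar_quad_form a p q 0 x k + (\<gamma> * a^2 + p * a + q) * (ar_seq a x k)^2"
  define \<beta> where "\<beta> = (2 * \<gamma> * a + p) * ar_seq a x k"
  have "r > 0"
    using assms by (simp add: r_def)
  have "(\<integral>\<^sup>+ y. ennreal (exp (ar_quad_form a p q \<gamma> (x(Suc k := y)) (Suc k))) \<partial>normal_measure \<sigma>)
      = (\<integral>\<^sup>+ y. ennreal (exp A) * ennreal (exp (\<beta> * y + \<gamma> * y^2)) \<partial>normal_measure \<sigma>)"
    by (intro nn_integral_cong)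
      (simp add: ar_quad_form_fun_upd_Suc A_def \<beta>_def exp_add ennreal_mult[symmetric] algebra_simps)
  also have "\<dots> = ennreal (exp A) * (\<integral>\<^sup>+ y. ennreal (exp (\<beta> * y + \<gamma> * y^2)) \<partial>normal_measure \<sigma>)"
    by (rule nn_integral_cmult) auto
  also have "\<dots> = ennreal (exp A) * ennreal (exp (\<sigma>^2 * \<beta>^2 / (2 * r)) / sqrt r)"
    using nn_integral_normal_exp_quadratic[OF assms] by (simp add: r_def)
  also have "\<dots> = ennreal (1 / sqrt r) * ennreal (exp (A + \<sigma>^2 * \<beta>^2 / (2 * r)))"
    using \<open>r > 0\<close> by (simp add: ennreal_mult[symmetric] exp_add)
  also have "A + \<sigma>^2 * \<beta>^2 / (2 * r) = ar_quad_form a p q (riccati_step \<sigma> a p q \<gamma>) x k"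
  proof -
    have "\<sigma>^2 * \<beta>^2 / (2 * r) = \<sigma>^2 * (2 * \<gamma> * a + p)^2 / (2 * r) * (ar_seq a x k)^2"
      by (simp add: \<beta>_def power_mult_distrib)
    then show ?thesis
      by (simp add: A_def ar_quad_form_def riccati_step_def r_def algebra_simps)
  qed
  finally show ?thesis
    by (simp only: r_def)
qed

lemma nn_integral_exp_ar_quad_form:
  assumes "\<sigma> > 0"
    and "\<And>j. j < k \<Longrightarrow> 2 * \<sigma>^2 * g j < 1"
    and "\<And>j. Suc j < k \<Longrightarrow> g (Suc j) = riccati_step \<sigma> a p q (g j)"
  shows "(\<integral>\<^sup>+ x. ennreal (exp (ar_quad_form a p q (g 0) x k)) \<partial>PiM {1..k} (\<lambda>_. normal_measure \<sigma>))
       = ennreal (\<Prod>j<k. 1 / sqrt (1 - 2 * \<sigma>^2 * g j))"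
  using assms(2,3)
proof (induction k arbitrary: g)
  case 0
  then show ?case
    by (simp add: ar_quad_form_def PiM_empty nn_integral_count_space_finite)
next
  case (Suc k)
  interpret product_sigma_finite "\<lambda>_. normal_measure \<sigma>"
    using product_sigma_finite_normal_measure[OF \<open>\<sigma> > 0\<close>] .
  let ?P = "\<lambda>k. PiM {1..k} (\<lambda>_. normal_measure \<sigma>)"
  have riccati: "ar_quad_form a p q (riccati_step \<sigma> a p q (g 0)) x k = ar_quad_form a p q (g (Suc 0)) x k" for x
    using Suc.prems(2)[of 0] by (cases k) (simp_all add: ar_quad_form_def)
  have IH: "(\<integral>\<^sup>+ x. ennreal (exp (ar_quad_form a p q (g (Suc 0)) x k)) \<partial>?P k)
      = ennreal (\<Prod>j<k. 1 / sqrt (1 - 2 * \<sigma>^2 * g (Suc j)))"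
    by (rule Suc.IH) (use Suc.prems(1) in simp, use Suc.prems(2) in simp)
  have "(\<integral>\<^sup>+ x. ennreal (exp (ar_quad_form a p q (g 0) x (Suc k))) \<partial>?P (Suc k))
      = (\<integral>\<^sup>+ x. (\<integral>\<^sup>+ y. ennreal (exp (ar_quad_form a p q (g 0) (x(Suc k := y)) (Suc k))) \<partial>normal_measure \<sigma>) \<partial>?P k)"
  proof -
    have "{1..Suc k} = insert (Suc k) {1..k}"
      by auto
    moreover have "(\<lambda>x. ennreal (exp (ar_quad_form a p q (g 0) x (Suc k))))
        \<in> borel_measurable (PiM (insert (Suc k) {1..k}) (\<lambda>_. normal_measure \<sigma>))"
      unfolding \<open>{1..Suc k} = insert (Suc k) {1..k}\<close>[symmetric] by measurable
    ultimately show ?thesis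
      by (simp only:) (rule product_nn_integral_insert, auto)
  qed
  also have "\<dots> = (\<integral>\<^sup>+ x. ennreal (1 / sqrt (1 - 2 * \<sigma>^2 * g 0)) * ennreal (exp (ar_quad_form a p q (g (Suc 0)) x k)) \<partial>?P k)"
    using nn_integral_exp_ar_quad_form_last[OF \<open>\<sigma> > 0\<close> Suc.prems(1)[of 0]] by (simp add: riccati)
  also have "\<dots> = ennreal (1 / sqrt (1 - 2 * \<sigma>^2 * g 0)) * (\<integral>\<^sup>+ x. ennreal (exp (ar_quad_form a p q (g (Suc 0)) x k)) \<partial>?P k)"
    by (rule nn_integral_cmult) measurable
  also have "\<dots> = ennreal (1 / sqrt (1 - 2 * \<sigma>^2 * g 0)) * ennreal (\<Prod>j<k. 1 / sqrt (1 - 2 * \<sigma>^2 * g (Suc j)))"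
    by (simp only: IH)
  also have "\<dots> = ennreal (\<Prod>j<Suc k. 1 / sqrt (1 - 2 * \<sigma>^2 * g j))"
    unfolding prod.lessThan_Suc_shift by (rule ennreal_mult'[symmetric]) (use Suc.prems(1)[of 0] in simp)
  finally show ?case .
qed

lemma measure_le_prod_if_ar_quad_form_nonneg:
  assumes "\<sigma> > 0" and E: "E \<in> sets (PiM {1..n} (\<lambda>_. normal_measure \<sigma>))"
    and nonneg: "\<And>x. x \<in> E \<Longrightarrow> 0 \<le> ar_quad_form a p q 0 x n"
    and lt: "\<And>j. j < n \<Longrightarrow> 2 * \<sigma>^2 * g j < 1"
    and rec: "\<And>j. Suc j < n \<Longrightarrow> g (Suc j) = riccati_step \<sigma> a p q (g j)"
    and "g 0 = 0"
  shows "measure (PiM {1..n} (\<lambda>_. normal_measure \<sigma>)) E \<le> (\<Prod>j<n. 1 / sqrt (1 - 2 * \<sigma>^2 * g j))"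
proof -
  let ?P = "PiM {1..n} (\<lambda>_. normal_measure \<sigma>)"
  interpret P: prob_space ?P
    by (intro prob_space_PiM prob_space_normal_measure \<open>\<sigma> > 0\<close>)
  have "ennreal (measure ?P E) = emeasure ?P E"
    by (rule P.emeasure_eq_measure[symmetric])
  also have "\<dots> = (\<integral>\<^sup>+ x. indicator E x \<partial>?P)"
    using E by simp
  also have "\<dots> \<le> (\<integral>\<^sup>+ x. ennreal (exp (ar_quad_form a p q (g 0) x n)) \<partial>?P)"
    using nonneg \<open>g 0 = 0\<close> by (intro nn_integral_mono) (simp add: indicator_def)
  also have "\<dots> = ennreal (\<Prod>j<n. 1 / sqrt (1 - 2 * \<sigma>^2 * g j))"
    using nn_integral_exp_ar_quad_form[OF \<open>\<sigma> > 0\<close>, of n g] lt rec by blast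
  finally have "ennreal (measure ?P E) \<le> ennreal (\<Prod>j<n. 1 / sqrt (1 - 2 * \<sigma>^2 * g j))" .
  moreover have "0 \<le> (\<Prod>j<n. 1 / sqrt (1 - 2 * \<sigma>^2 * g j))"
    using lt by (intro prod_nonneg) (simp add: less_imp_le)
  ultimately show ?thesis
    by (simp add: ennreal_le_iff)
qed

lemma ln_prod_inverse_sqrt:
  fixes r :: "'a \<Rightarrow> real"
  assumes "finite A" and "\<And>j. j \<in> A \<Longrightarrow> 0 < r j"
  shows "ln (\<Prod>j\<in>A. 1 / sqrt (r j)) = - (\<Sum>j\<in>A. ln (r j)) / 2"
proof -
  have "ln (\<Prod>j\<in>A. 1 / sqrt (r j)) = (\<Sum>j\<in>A. ln (1 / sqrt (r j)))"
    using assms by (intro ln_prod) (auto simp: less_imp_neq[symmetric])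
  also have "\<dots> = (\<Sum>j\<in>A. - ln (r j) / 2)"
  proof (rule sum.cong)
    fix j assume "j \<in> A"
    then have "0 < r j"
      by (rule assms(2))
    then show "ln (1 / sqrt (r j)) = - ln (r j) / 2"
      by (simp add: ln_div ln_sqrt)
  qed simp
  finally show ?thesis
    by (simp add: sum_negf sum_divide_distrib)
qed

lemma ar_quad_form_zero:
  "n \<ge> 1 \<Longrightarrow> ar_quad_form a p q 0 x n
     = (\<Sum>i=1..n-1. p * ar_seq a x i * ar_seq a x (i + 1) + q * (ar_seq a x i)^2)"
proof -
  assume "n \<ge> 1"
  then have "{..<n} = insert 0 {1..n-1}"
    by auto
  then show ?thesis
    by (simp add: ar_quad_form_def)
qed

lemma ar_quad_form_nonneg_if_deviation:
  assumes "n \<ge> 1" and "0 \<le> s" and dev: "\<eta> < \<epsilon> * (a_ml n (ar_seq a x) - a)"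
  shows "0 \<le> ar_quad_form a (\<epsilon> * s) (- (s * (\<epsilon> * a + \<eta>))) 0 x n"
proof -
  define N where "N = (\<Sum>i=1..n-1. ar_seq a x i * ar_seq a x (i + 1))"
  define D where "D = (\<Sum>i=1..n-1. (ar_seq a x i)^2)"
  have form: "ar_quad_form a (\<epsilon> * s) (- (s * (\<epsilon> * a + \<eta>))) 0 x n = s * (\<epsilon> * N - (\<epsilon> * a + \<eta>) * D)"
    using \<open>n \<ge> 1\<close>
    by (simp add: ar_quad_form_zero N_def D_def sum.distrib sum_distrib_left sum_subtractf algebra_simps)
  show ?thesis
  proof (cases "D = 0")
    case True
    then have "\<forall>i\<in>{1..n-1}. ar_seq a x i = 0"
      unfolding D_def by (subst (asm) sum_nonneg_eq_0_iff) auto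
    then have "N = 0"
      by (simp add: N_def)
    then show ?thesis
      using form True by simp
  next
    case False
    then have "D > 0"
      by (simp add: D_def order_less_le sum_nonneg)
    moreover have "\<eta> < \<epsilon> * (N / D - a)"
      using dev by (simp add: a_ml_def N_def D_def)
    ultimately have "(\<epsilon> * a + \<eta>) * D < \<epsilon> * N"
      by (simp add: field_simps)
    then show ?thesis
      using form \<open>0 \<le> s\<close> by simp
  qed
qed

lemma riccati_step_deviation_eq:
  assumes "\<epsilon>^2 = 1" and "2 * \<sigma>^2 * \<gamma> \<noteq> 1"
  shows "riccati_step \<sigma> a (\<epsilon> * s) (- (s * (\<epsilon> * a + \<eta>))) \<gamma>
       = ((a^2 + 2 * \<sigma>^2 * s * (\<epsilon> * a + \<eta>)) * \<gamma> + (\<sigma>^2 * s^2 - 2 * \<eta> * s) / 2) / (1 - 2 * \<sigma>^2 * \<gamma>)"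
proof -
  have "(2 * \<gamma> * a + \<epsilon> * s)^2 = 4 * \<gamma>^2 * a^2 + 4 * \<epsilon> * \<gamma> * a * s + s^2"
    using assms(1) by (simp add: power2_eq_square algebra_simps)
  then show ?thesis
    using assms(2) unfolding riccati_step_def by (simp add: field_simps power2_eq_square)
qed

section \<open>Positivity of the deviation probability\<close>

text \<open>Since \<open>ln 0 = 0\<close>, the rate bounds need a positive deviation probability; it comes from
  this box of noise vectors.\<close>

definition witness_box :: "nat \<Rightarrow> real \<Rightarrow> nat \<Rightarrow> real set" where
  "witness_box n c i = (if i = 1 then {1..2} else if i = n then {c - 1..c + 1} else {0..1})"

lemma ar_seq_witness_box_le_power:
  assumes "a > 1" and x: "x \<in> PiE {1..n} (witness_box n c)" and "1 \<le> i" and "i < n"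
  shows "1 \<le> ar_seq a x i \<and> ar_seq a x i \<le> 2 * (a + 1)^i"
  using assms(3,4)
proof (induction i)
  case (Suc i)
  have x_Suc: "x (Suc i) \<in> witness_box n c (Suc i)"
    using Suc.prems by (intro PiE_mem[OF x]) auto
  show ?case
  proof (cases "i = 0")
    case True
    then show ?thesis
      using x_Suc Suc.prems \<open>a > 1\<close> by (simp add: witness_box_def)
  next
    case False
    then have IH: "1 \<le> ar_seq a x i" "ar_seq a x i \<le> 2 * (a + 1)^i"
      using Suc by auto
    have "0 \<le> x (Suc i)" "x (Suc i) \<le> 1"
      using x_Suc False Suc.prems by (simp_all add: witness_box_def)
    have "1 \<le> (a + 1)^i"
      using \<open>a > 1\<close> by (intro one_le_power) simp
    have "1 * 1 \<le> a * ar_seq a x i"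
      using IH \<open>a > 1\<close> by (intro mult_mono) auto
    moreover have "a * ar_seq a x i \<le> a * (2 * (a + 1)^i)"
      using IH \<open>a > 1\<close> by simp
    ultimately show ?thesis
      using \<open>0 \<le> x (Suc i)\<close> \<open>x (Suc i) \<le> 1\<close> \<open>1 \<le> (a + 1)^i\<close> by (simp add: algebra_simps)
  qed
qed simp

lemma ar_seq_witness_box_bounds:
  assumes "a > 1" and "x \<in> PiE {1..n} (witness_box n c)" and "i \<in> {1..n-1}"
  shows "1 \<le> ar_seq a x i" and "ar_seq a x i \<le> 2 * (a + 1)^n"
proof -
  have "1 \<le> i" "i < n"
    using assms(3) by auto
  moreover have "(a + 1)^i \<le> (a + 1)^n"
    using assms(1,3) by (intro power_increasing) auto
  ultimately show "1 \<le> ar_seq a x i" "ar_seq a x i \<le> 2 * (a + 1)^n"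
    using ar_seq_witness_box_le_power[OF assms(1,2)] by force+
qed

lemma witness_box_sum_sq_bounds:
  assumes "a > 1" and "n \<ge> 2" and x: "x \<in> PiE {1..n} (witness_box n c)"
  shows "1 \<le> (\<Sum>i=1..n-1. (ar_seq a x i)^2)"
    and "(\<Sum>i=1..n-1. (ar_seq a x i)^2) \<le> real (n - 1) * (2 * (a + 1)^n)^2"
proof -
  note U = ar_seq_witness_box_bounds[OF \<open>a > 1\<close> x]
  have "(\<Sum>i=1..n-1. (1::real)) \<le> (\<Sum>i=1..n-1. (ar_seq a x i)^2)"
    using U(1) by (intro sum_mono) (simp add: one_le_power)
  then show "1 \<le> (\<Sum>i=1..n-1. (ar_seq a x i)^2)"
    using \<open>n \<ge> 2\<close> by simp
  have "(\<Sum>i=1..n-1. (ar_seq a x i)^2) \<le> (\<Sum>i=1..n-1. (2 * (a + 1)^n)^2)"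
  proof (intro sum_mono power_mono)
    fix i assume "i \<in> {1..n-1}"
    with U[OF this] show "ar_seq a x i \<le> 2 * (a + 1)^n" "0 \<le> ar_seq a x i"
      by simp_all
  qed
  then show "(\<Sum>i=1..n-1. (ar_seq a x i)^2) \<le> real (n - 1) * (2 * (a + 1)^n)^2"
    by simp
qed

lemma witness_box_sum_cross_bounds:
  assumes "a > 1" and "n \<ge> 2" and x: "x \<in> PiE {1..n} (witness_box n c)"
  shows "0 \<le> (\<Sum>i=1..n-2. ar_seq a x i * x (i + 1))"
    and "(\<Sum>i=1..n-2. ar_seq a x i * x (i + 1)) \<le> real (n - 1) * (2 * (a + 1)^n)"
proof -
  have summand: "0 \<le> ar_seq a x i * x (i + 1)" "ar_seq a x i * x (i + 1) \<le> 2 * (a + 1)^n * 1"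
    if "i \<in> {1..n-2}" for i
  proof -
    have "i \<in> {1..n-1}"
      using that by auto
    note U = ar_seq_witness_box_bounds[OF \<open>a > 1\<close> x this]
    have "x (i + 1) \<in> witness_box n c (i + 1)"
      by (rule PiE_mem[OF x]) (use that in auto)
    moreover have "i + 1 \<noteq> 1" "i + 1 \<noteq> n"
      using that \<open>n \<ge> 2\<close> by auto
    ultimately have "0 \<le> x (i + 1)" "x (i + 1) \<le> 1"
      by (simp_all add: witness_box_def)
    with U show "0 \<le> ar_seq a x i * x (i + 1)"
      by simp
    show "ar_seq a x i * x (i + 1) \<le> 2 * (a + 1)^n * 1"
      using U \<open>0 \<le> x (i + 1)\<close> \<open>x (i + 1) \<le> 1\<close> \<open>a > 1\<close> by (intro mult_mono) auto
  qed
  show "0 \<le> (\<Sum>i=1..n-2. ar_seq a x i * x (i + 1))"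
    using summand(1) by (rule sum_nonneg)
  have "(\<Sum>i=1..n-2. ar_seq a x i * x (i + 1)) \<le> (\<Sum>i=1..n-2. 2 * (a + 1)^n * 1)"
    using summand(2) by (rule sum_mono)
  also have "\<dots> = real (n - 2) * (2 * (a + 1)^n)"
    by simp
  also have "\<dots> \<le> real (n - 1) * (2 * (a + 1)^n)"
    using \<open>a > 1\<close> by (intro mult_right_mono) auto
  finally show "(\<Sum>i=1..n-2. ar_seq a x i * x (i + 1)) \<le> real (n - 1) * (2 * (a + 1)^n)" .
qed

lemma deviation_on_witness_box:
  fixes a \<epsilon> \<eta> :: real and n :: nat
  defines "W \<equiv> 2 * (a + 1)^n"
  defines "C \<equiv> \<eta> * real (n - 1) * W^2 + real (n - 1) * W + 2"
  assumes "a > 1" and "n \<ge> 2" and "\<eta> > 0" and "\<epsilon> \<in> {-1, 1}"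
    and x: "x \<in> PiE {1..n} (witness_box n (\<epsilon> * C))"
  shows "\<eta> < \<epsilon> * (a_ml n (ar_seq a x) - a)"
proof -
  define D where "D = (\<Sum>i=1..n-1. (ar_seq a x i)^2)"
  define S where "S = (\<Sum>i=1..n-2. ar_seq a x i * x (i + 1))"
  note D = witness_box_sum_sq_bounds[OF \<open>a > 1\<close> \<open>n \<ge> 2\<close> x, folded D_def W_def]
  note S = witness_box_sum_cross_bounds[OF \<open>a > 1\<close> \<open>n \<ge> 2\<close> x, folded S_def W_def]
  have "n - 1 \<in> {1..n-1}"
    using \<open>n \<ge> 2\<close> by simp
  note U_last = ar_seq_witness_box_bounds[OF \<open>a > 1\<close> x this, folded W_def]
  have x_last: "C - 1 \<le> \<epsilon> * x n"
    using PiE_mem[OF x, of n] \<open>n \<ge> 2\<close> \<open>\<epsilon> \<in> {-1, 1}\<close> by (auto simp: witness_box_def)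
  have "D \<noteq> 0"
    using D(1) by simp
  then have "a_ml n (ar_seq a x) - a = (\<Sum>i=1..n-1. ar_seq a x i * x (i + 1)) / D"
    unfolding D_def by (rule a_ml_ar_seq_minus_eq)
  also have "(\<Sum>i=1..n-1. ar_seq a x i * x (i + 1)) = S + ar_seq a x (n - 1) * x n"
  proof -
    have "{1..n-1} = insert (n - 1) {1..n-2}" "n - 1 \<notin> {1..n-2}" "n - 1 + 1 = n"
      using \<open>n \<ge> 2\<close> by auto
    then show ?thesis
      by (simp add: S_def)
  qed
  finally have a_ml_eq: "a_ml n (ar_seq a x) - a = (S + ar_seq a x (n - 1) * x n) / D" .
  have "0 \<le> C - 1"
    using \<open>\<eta> > 0\<close> U_last by (simp add: C_def)
  have "1 * (\<epsilon> * x n) \<le> ar_seq a x (n - 1) * (\<epsilon> * x n)"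
    using U_last x_last \<open>0 \<le> C - 1\<close> by (intro mult_right_mono) auto
  then have "C - 1 \<le> ar_seq a x (n - 1) * (\<epsilon> * x n)"
    using x_last by simp
  moreover have "- real (n - 1) * W \<le> \<epsilon> * S"
    using S \<open>\<epsilon> \<in> {-1, 1}\<close> by auto
  moreover have "\<eta> * D \<le> \<eta> * real (n - 1) * W^2"
    using D(2) \<open>\<eta> > 0\<close> by simp
  ultimately have "\<eta> * D < \<epsilon> * (S + ar_seq a x (n - 1) * x n)"
    by (simp add: C_def algebra_simps)
  then show ?thesis
    using D(1) by (simp add: a_ml_eq pos_less_divide_eq)
qed

lemma measure_deviation_pos:
  fixes \<epsilon> :: real
  assumes "\<sigma> > 0" and "a > 1" and "\<eta> > 0" and "n \<ge> 2" and "\<epsilon> \<in> {-1, 1}"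
  defines "P \<equiv> PiM {1..n} (\<lambda>_. normal_measure \<sigma>)"
  shows "0 < measure P {x \<in> space P. \<eta> < \<epsilon> * (a_ml n (ar_seq a x) - a)}"
proof -
  interpret P: prob_space P
    unfolding P_def by (intro prob_space_PiM prob_space_normal_measure \<open>\<sigma> > 0\<close>)
  interpret product_sigma_finite "\<lambda>_. normal_measure \<sigma>"
    using product_sigma_finite_normal_measure[OF \<open>\<sigma> > 0\<close>] .
  define C where "C = \<eta> * real (n - 1) * (2 * (a + 1)^n)^2 + real (n - 1) * (2 * (a + 1)^n) + 2"
  define B where "B = PiE {1..n} (witness_box n (\<epsilon> * C))"
  define E where "E = {x \<in> space P. \<eta> < \<epsilon> * (a_ml n (ar_seq a x) - a)}"
  have "emeasure P B = (\<Prod>i\<in>{1..n}. emeasure (normal_measure \<sigma>) (witness_box n (\<epsilon> * C) i))"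
    unfolding B_def P_def by (rule emeasure_PiM) (auto simp: witness_box_def)
  also have "\<dots> > 0"
    using emeasure_normal_measure_Icc_pos[OF \<open>\<sigma> > 0\<close>]
    by (simp add: witness_box_def zero_less_iff_neq_zero)
  also have "B \<subseteq> E"
    using deviation_on_witness_box[OF \<open>a > 1\<close> \<open>n \<ge> 2\<close> \<open>\<eta> > 0\<close> \<open>\<epsilon> \<in> {-1, 1}\<close>]
    by (auto simp: B_def E_def C_def P_def space_PiM)
  then have "emeasure P B \<le> emeasure P E"
    unfolding E_def P_def by (intro emeasure_mono) measurable
  finally show ?thesis
    by (simp add: E_def P.emeasure_eq_measure)
qed

lemma measure_deviation_le_prod:
  fixes \<epsilon> :: real
  assumes "\<sigma> > 0" and "n \<ge> 1" and "s > 0" and "\<epsilon> \<in> {-1, 1}"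
    and lt: "\<And>l. l \<in> {1..n-1} \<Longrightarrow> 2 * \<sigma>^2 * rec_seq a (\<epsilon> * a) \<sigma> \<eta> s (l - 1) < 1"
  defines "P \<equiv> PiM {1..n} (\<lambda>_. normal_measure \<sigma>)"
  shows "measure P {x \<in> space P. \<eta> < \<epsilon> * (a_ml n (ar_seq a x) - a)}
       \<le> (\<Prod>l=1..n-1. 1 / sqrt (1 - 2 * \<sigma>^2 * rec_seq a (\<epsilon> * a) \<sigma> \<eta> s (l - 1)))"
proof -
  define E where "E = {x \<in> space P. \<eta> < \<epsilon> * (a_ml n (ar_seq a x) - a)}"
  define g where "g j = (if j = 0 then 0 else rec_seq a (\<epsilon> * a) \<sigma> \<eta> s (j - 1))" for j
  have "\<epsilon>^2 = 1"
    using \<open>\<epsilon> \<in> {-1, 1}\<close> by auto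
  have E: "E \<in> sets P"
    unfolding E_def P_def by measurable
  have g_lt: "2 * \<sigma>^2 * g j < 1" if "j < n" for j
    using lt[of j] that by (cases "j = 0") (auto simp: g_def)
  have g_rec: "g (Suc j) = riccati_step \<sigma> a (\<epsilon> * s) (- (s * (\<epsilon> * a + \<eta>))) (g j)" if "Suc j < n" for j
  proof -
    have "2 * \<sigma>^2 * g j \<noteq> 1"
      using g_lt[of j] that by simp
    then show ?thesis
      using riccati_step_deviation_eq[OF \<open>\<epsilon>^2 = 1\<close>, of \<sigma> "g j"] by (cases j) (simp_all add: g_def)
  qed
  have "0 \<le> ar_quad_form a (\<epsilon> * s) (- (s * (\<epsilon> * a + \<eta>))) 0 x n" if "x \<in> E" for x
    using that \<open>n \<ge> 1\<close> \<open>s > 0\<close> by (intro ar_quad_form_nonneg_if_deviation) (auto simp: E_def)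
  moreover have "g 0 = 0"
    by (simp add: g_def)
  ultimately have "measure P E \<le> (\<Prod>j<n. 1 / sqrt (1 - 2 * \<sigma>^2 * g j))"
    unfolding P_def
    by (intro measure_le_prod_if_ar_quad_form_nonneg[where g = g, OF \<open>\<sigma> > 0\<close> E[unfolded P_def] _ g_lt g_rec])
  also have "(\<Prod>j<n. 1 / sqrt (1 - 2 * \<sigma>^2 * g j)) = (\<Prod>j<Suc (n - 1). 1 / sqrt (1 - 2 * \<sigma>^2 * g j))"
    using \<open>n \<ge> 1\<close> by simp
  also have "\<dots> = (\<Prod>l=1..n-1. 1 / sqrt (1 - 2 * \<sigma>^2 * rec_seq a (\<epsilon> * a) \<sigma> \<eta> s (l - 1)))"
    unfolding prod.lessThan_Suc_shift by (simp add: g_def prod.atLeast1_atMost_eq)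
  finally show ?thesis
    by (simp add: E_def)
qed

lemma neg_ln_measure_deviation_ge:
  fixes \<epsilon> :: real
  assumes "\<sigma> > 0" and "a > 1" and "\<eta> > 0" and "n \<ge> 2" and "s > 0" and "\<epsilon> \<in> {-1, 1}"
    and lt: "\<And>l. l \<in> {1..n-1} \<Longrightarrow> 2 * \<sigma>^2 * rec_seq a (\<epsilon> * a) \<sigma> \<eta> s (l - 1) < 1"
  defines "P \<equiv> PiM {1..n} (\<lambda>_. normal_measure \<sigma>)"
  shows "(\<Sum>l=1..n-1. ln (1 - 2 * \<sigma>^2 * rec_seq a (\<epsilon> * a) \<sigma> \<eta> s (l - 1))) / 2
       \<le> - ln (measure P {x \<in> space P. \<eta> < \<epsilon> * (a_ml n (ar_seq a x) - a)})"
proof -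
  let ?E = "{x \<in> space P. \<eta> < \<epsilon> * (a_ml n (ar_seq a x) - a)}"
  have "0 < measure P ?E"
    unfolding P_def using assms by (intro measure_deviation_pos) auto
  moreover have "measure P ?E \<le> (\<Prod>l=1..n-1. 1 / sqrt (1 - 2 * \<sigma>^2 * rec_seq a (\<epsilon> * a) \<sigma> \<eta> s (l - 1)))"
    unfolding P_def using assms by (intro measure_deviation_le_prod) auto
  ultimately have "ln (measure P ?E) \<le> ln (\<Prod>l=1..n-1. 1 / sqrt (1 - 2 * \<sigma>^2 * rec_seq a (\<epsilon> * a) \<sigma> \<eta> s (l - 1)))"
    by simp
  also have "\<dots> = - (\<Sum>l=1..n-1. ln (1 - 2 * \<sigma>^2 * rec_seq a (\<epsilon> * a) \<sigma> \<eta> s (l - 1))) / 2"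
    using lt by (intro ln_prod_inverse_sqrt) auto
  finally show ?thesis
    by simp
qed

section \<open>The iteration \<open>x \<mapsto> (A * x + d) / (1 + x)\<close>\<close>

lemma mobius_iterate_bounds:
  fixes A d :: real and x :: "nat \<Rightarrow> real"
  assumes "A > 1" and "d > 0" and "x 0 = d" and step: "\<And>k. x (Suc k) = (A * x k + d) / (1 + x k)"
  shows "0 < x k \<and> 1 / x k \<le> (1 / A)^k / d + 1 / (A - 1)"
proof (induction k)
  case 0
  then show ?case
    using assms by simp
next
  case (Suc k)
  then have "0 < x k" and IH: "1 / x k \<le> (1 / A)^k / d + 1 / (A - 1)"
    by auto
  have "1 / x (Suc k) = (1 + x k) / (A * x k + d)"
    by (simp add: step)
  also have "\<dots> \<le> (1 + x k) / (A * x k)"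
    using \<open>0 < x k\<close> assms(1,2) by (intro divide_left_mono) (auto intro!: mult_pos_pos add_pos_pos)
  also have "\<dots> = (1 / x k + 1) / A"
    using \<open>0 < x k\<close> assms(1) by (simp add: field_simps)
  also have "\<dots> \<le> ((1 / A)^k / d + 1 / (A - 1) + 1) / A"
    using IH assms(1) by (intro divide_right_mono) auto
  also have "\<dots> = (1 / A)^(Suc k) / d + 1 / (A - 1)"
    using assms(1,2) by (simp add: field_simps)
  finally have "1 / x (Suc k) \<le> (1 / A)^(Suc k) / d + 1 / (A - 1)" .
  moreover have "0 < x (Suc k)"
    unfolding step using \<open>0 < x k\<close> assms(1,2) by (intro divide_pos_pos add_pos_pos mult_pos_pos) auto
  ultimately show ?case
    by simp
qed

lemma sum_ln_mobius_iterate_ge: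
  fixes A A\<^sub>0 d \<theta> :: real and x :: "nat \<Rightarrow> real"
  assumes "A\<^sub>0 \<le> A" and "1 < A\<^sub>0" and "d > 0" and "x 0 = d"
    and "\<And>k. x (Suc k) = (A * x k + d) / (1 + x k)"
    and "\<theta> > 0" and "1 \<le> \<theta> * d * A\<^sub>0^K"
  shows "real (m - K) * ln (1 + 1 / (\<theta> + 1 / (A\<^sub>0 - 1))) \<le> (\<Sum>k<m. ln (1 + x k))"
proof -
  define w where "w = \<theta> + 1 / (A\<^sub>0 - 1)"
  have "w > 0"
    unfolding w_def using assms(2,6) by (intro add_pos_pos) auto
  have x: "0 < x k" "1 / x k \<le> (1 / A)^k / d + 1 / (A - 1)" for k
    using mobius_iterate_bounds[of A d x k] assms(1-5) by auto
  have late: "ln (1 + 1 / w) \<le> ln (1 + x k)" if "K \<le> k" for k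
  proof -
    have "(1 / A)^k \<le> (1 / A\<^sub>0)^k"
      using assms(1,2) by (intro power_mono) (auto simp: field_simps)
    also have "\<dots> \<le> (1 / A\<^sub>0)^K"
      using that assms(2) by (intro power_decreasing) auto
    also have "\<dots> \<le> \<theta> * d"
      using assms(2,7) by (simp add: power_one_over field_simps)
    finally have "(1 / A)^k / d \<le> \<theta>"
      using assms(3) by (simp add: divide_le_eq mult.commute)
    moreover have "1 / (A - 1) \<le> 1 / (A\<^sub>0 - 1)"
      using assms(1,2) by (intro divide_left_mono) auto
    ultimately have "1 / x k \<le> w"
      using x(2)[of k] by (simp add: w_def)
    then have "1 / w \<le> x k"
      using x(1)[of k] \<open>w > 0\<close> by (simp add: divide_le_eq mult.commute)
    then show ?thesis
      using \<open>w > 0\<close> by (intro ln_mono) (auto intro: add_pos_pos)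
  qed
  have "real (m - K) * ln (1 + 1 / w) = (\<Sum>k\<in>{K..<m}. ln (1 + 1 / w))"
    by simp
  also have "\<dots> \<le> (\<Sum>k\<in>{K..<m}. ln (1 + x k))"
    using late by (intro sum_mono) auto
  also have "\<dots> \<le> (\<Sum>k<m. ln (1 + x k))"
    using x(1) by (intro sum_mono2) (auto simp: less_imp_le)
  finally show ?thesis
    by (simp add: w_def)
qed

lemma rec_seq_Suc_scaled:
  "- 2 * \<sigma>^2 * rec_seq a b \<sigma> \<eta> s (Suc k)
     = ((a^2 + 2 * \<sigma>^2 * s * (b + \<eta>)) * (- 2 * \<sigma>^2 * rec_seq a b \<sigma> \<eta> s k) + (- 2 * \<sigma>^2 * rec_seq a b \<sigma> \<eta> s 0))
       / (1 + (- 2 * \<sigma>^2 * rec_seq a b \<sigma> \<eta> s k))"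
  unfolding rec_seq.simps(2)[of a b \<sigma> \<eta> s k] by (simp add: algebra_simps)

lemma rec_seq_min_initial_ge:
  fixes \<theta> :: real
  assumes "\<sigma> > 0" and "n \<ge> 1" and "1 / sqrt (real n) \<le> \<eta>" and "1 / sqrt (real n) \<le> \<theta>"
  shows "1 / real n \<le> - 2 * \<sigma>^2 * rec_seq a b \<sigma> \<eta> (min \<eta> \<theta> / \<sigma>^2) 0"
proof -
  define \<tau> where "\<tau> = min \<eta> \<theta>"
  have "0 < 1 / sqrt (real n)"
    using \<open>n \<ge> 1\<close> by simp
  then have "0 < \<eta>" "0 < \<theta>"
    using assms(3,4) by linarith+
  then have "0 < \<tau>" "\<tau> \<le> \<eta>" "1 / sqrt (real n) \<le> \<tau>"
    using assms(3,4) by (auto simp: \<tau>_def)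
  have init: "- 2 * \<sigma>^2 * rec_seq a b \<sigma> \<eta> (\<tau> / \<sigma>^2) 0 = 2 * \<eta> * \<tau> - \<tau>^2"
    using \<open>\<sigma> > 0\<close> by (simp add: power2_eq_square field_simps)
  have "1 / real n = 1 / sqrt (real n) * (1 / sqrt (real n))"
    using \<open>n \<ge> 1\<close> by (simp add: real_sqrt_mult[symmetric])
  also have "\<dots> \<le> \<tau> * \<eta>"
    using \<open>1 / sqrt (real n) \<le> \<tau>\<close> assms(3) \<open>0 < \<tau>\<close> by (intro mult_mono) auto
  also have "\<dots> \<le> 2 * \<eta> * \<tau> - \<tau>^2"
    using \<open>\<tau> \<le> \<eta>\<close> \<open>0 < \<tau>\<close> by (simp add: power2_eq_square algebra_simps)
  finally show ?thesis
    unfolding \<tau>_def[symmetric] init .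
qed

lemma rec_seq_min_growth_ge:
  fixes \<epsilon> \<theta> :: real
  assumes "\<sigma> > 0" and "a > 0" and "\<eta> > 0" and "\<theta> > 0" and "\<epsilon> \<in> {-1, 1}"
  shows "a^2 - 2 * a * \<theta> \<le> a^2 + 2 * \<sigma>^2 * (min \<eta> \<theta> / \<sigma>^2) * (\<epsilon> * a + \<eta>)"
proof -
  define \<tau> where "\<tau> = min \<eta> \<theta>"
  have "0 < \<tau>" "\<tau> \<le> \<theta>"
    using assms by (auto simp: \<tau>_def)
  then have "- (\<tau> * a) \<le> \<tau> * (\<epsilon> * a + \<eta>)" "\<tau> * a \<le> \<theta> * a"
    using assms by (auto simp: algebra_simps)
  moreover have "2 * \<sigma>^2 * (\<tau> / \<sigma>^2) * (\<epsilon> * a + \<eta>) = 2 * (\<tau> * (\<epsilon> * a + \<eta>))"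
    using \<open>\<sigma> > 0\<close> by simp
  ultimately show ?thesis
    unfolding \<tau>_def[symmetric] by (simp add: algebra_simps)
qed

lemma sum_ln_rec_seq_ge:
  fixes \<epsilon> \<theta> :: real and K :: nat
  assumes "\<sigma> > 0" and "a > 1" and "\<epsilon> \<in> {-1, 1}" and "n \<ge> 1"
    and A\<^sub>0: "1 < a^2 - 2 * a * \<theta>" and "\<theta> > 0"
    and "1 / sqrt (real n) \<le> \<eta>" and "1 / sqrt (real n) \<le> \<theta>"
    and K: "real n \<le> \<theta> * (a^2 - 2 * a * \<theta>)^K"
  defines "s \<equiv> min \<eta> \<theta> / \<sigma>^2"
  shows "rec_seq a (\<epsilon> * a) \<sigma> \<eta> s k < 0"
    and "real (n - 1 - K) * ln (1 + 1 / (\<theta> + 1 / (a^2 - 2 * a * \<theta> - 1)))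
       \<le> (\<Sum>l=1..n-1. ln (1 - 2 * \<sigma>^2 * rec_seq a (\<epsilon> * a) \<sigma> \<eta> s (l - 1)))"
proof -
  define A where "A = a^2 + 2 * \<sigma>^2 * s * (\<epsilon> * a + \<eta>)"
  define X where "X k = - 2 * \<sigma>^2 * rec_seq a (\<epsilon> * a) \<sigma> \<eta> s k" for k
  have "0 < 1 / sqrt (real n)" "0 < 1 / real n"
    using \<open>n \<ge> 1\<close> by auto
  then have "\<eta> > 0"
    using assms(7) by linarith
  have A: "a^2 - 2 * a * \<theta> \<le> A"
    unfolding A_def s_def using assms(1-3,6) \<open>\<eta> > 0\<close> by (intro rec_seq_min_growth_ge) auto
  have "1 / real n \<le> X 0"
    unfolding X_def s_def using assms(1,4,7,8) by (rule rec_seq_min_initial_ge)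
  then have "X 0 > 0"
    using \<open>0 < 1 / real n\<close> by linarith
  have "1 \<le> \<theta> * X 0 * (a^2 - 2 * a * \<theta>)^K"
  proof -
    have "1 = 1 / real n * real n"
      using \<open>n \<ge> 1\<close> by simp
    also have "\<dots> \<le> X 0 * (\<theta> * (a^2 - 2 * a * \<theta>)^K)"
      using \<open>1 / real n \<le> X 0\<close> K \<open>X 0 > 0\<close> by (intro mult_mono) auto
    finally show ?thesis
      by (simp add: algebra_simps)
  qed
  have X_step: "X (Suc k) = (A * X k + X 0) / (1 + X k)" for k
    unfolding X_def A_def by (rule rec_seq_Suc_scaled)
  have "1 < A"
    using A\<^sub>0 A by linarith
  have "0 < X k"
    using mobius_iterate_bounds[OF \<open>1 < A\<close> \<open>X 0 > 0\<close> refl X_step] by simp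
  then show "rec_seq a (\<epsilon> * a) \<sigma> \<eta> s k < 0"
    using \<open>\<sigma> > 0\<close> by (simp add: X_def mult_less_0_iff)
  have "real (n - 1 - K) * ln (1 + 1 / (\<theta> + 1 / (a^2 - 2 * a * \<theta> - 1))) \<le> (\<Sum>k<n-1. ln (1 + X k))"
    using A A\<^sub>0 \<open>X 0 > 0\<close> X_step \<open>\<theta> > 0\<close> \<open>1 \<le> \<theta> * X 0 * (a^2 - 2 * a * \<theta>)^K\<close>
    by (intro sum_ln_mobius_iterate_ge) auto
  also have "\<dots> = (\<Sum>l=1..n-1. ln (1 - 2 * \<sigma>^2 * rec_seq a (\<epsilon> * a) \<sigma> \<eta> s (l - 1)))"
    by (simp add: X_def sum.atLeast1_atMost_eq)
  finally show "real (n - 1 - K) * ln (1 + 1 / (\<theta> + 1 / (a^2 - 2 * a * \<theta> - 1)))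
       \<le> (\<Sum>l=1..n-1. ln (1 - 2 * \<sigma>^2 * rec_seq a (\<epsilon> * a) \<sigma> \<eta> s (l - 1)))" .
qed

lemma real_le_mult_power_nat_ceiling_log:
  fixes \<theta> L :: real
  assumes "\<theta> > 0" and "L > 1" and "n \<ge> 1"
  shows "real n \<le> \<theta> * L ^ nat \<lceil>ln (real n / \<theta>) / ln L\<rceil>"
proof -
  have "ln (real n / \<theta>) / ln L \<le> real (nat \<lceil>ln (real n / \<theta>) / ln L\<rceil>)"
    by (rule real_nat_ceiling_ge)
  then have "ln (real n / \<theta>) \<le> real (nat \<lceil>ln (real n / \<theta>) / ln L\<rceil>) * ln L"
    using assms(2) by (simp add: divide_le_eq)
  also have "\<dots> = ln (L ^ nat \<lceil>ln (real n / \<theta>) / ln L\<rceil>)"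
    using assms(2) by (simp add: ln_realpow)
  finally show ?thesis
    using assms by (simp add: divide_le_eq mult.commute)
qed

lemma nat_ceiling_log_over_n_tendsto_zero:
  fixes \<theta> L :: real
  assumes "\<theta> > 0" and "L > 0"
  shows "(\<lambda>n. (1 + real (nat \<lceil>ln (real n / \<theta>) / L\<rceil>)) / real n) \<longlonglongrightarrow> 0"
proof (rule tendsto_sandwich[where f = "\<lambda>_. 0" and h = "\<lambda>n. (2 + ln (real n / \<theta>) / L) / real n"])
  show "eventually (\<lambda>n. (1 + real (nat \<lceil>ln (real n / \<theta>) / L\<rceil>)) / real n \<le> (2 + ln (real n / \<theta>) / L) / real n) sequentially"
    using eventually_ge_at_top[of "nat \<lceil>\<theta>\<rceil>"]
  proof eventually_elim
    case (elim n)
    then have "1 \<le> real n / \<theta>"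
      using assms(1) by (simp add: le_divide_eq)
    then have "0 \<le> ln (real n / \<theta>) / L"
      using assms(2) by simp
    then have "real (nat \<lceil>ln (real n / \<theta>) / L\<rceil>) \<le> ln (real n / \<theta>) / L + 1"
      by linarith
    then show ?case
      by (simp add: divide_right_mono)
  qed
  show "(\<lambda>n. (2 + ln (real n / \<theta>) / L) / real n) \<longlonglongrightarrow> 0"
    using assms by real_asymp
qed auto

lemma eventually_at_right_0_ln_gt:
  fixes a e :: real
  assumes "a > 1" and "e > 0"
  shows "eventually (\<lambda>\<theta>. 0 < \<theta> \<and> 1 < a^2 - 2 * a * \<theta> \<and>
           2 * ln a - e < ln (1 + 1 / (\<theta> + 1 / (a^2 - 2 * a * \<theta> - 1)))) (at_right 0)"
proof -
  define c where "c \<theta> = ln (1 + 1 / (\<theta> + 1 / (a^2 - 2 * a * \<theta> - 1)))" for \<theta>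
  have "1 < a^2"
    using \<open>a > 1\<close> by (simp add: one_less_power)
  have "(c \<longlongrightarrow> c 0) (at_right 0)"
    unfolding c_def using \<open>1 < a^2\<close> by (intro tendsto_intros) auto
  moreover have "c 0 = 2 * ln a"
    using \<open>a > 1\<close> by (simp add: c_def ln_realpow)
  ultimately have "eventually (\<lambda>\<theta>. 2 * ln a - e < c \<theta>) (at_right 0)"
    using \<open>e > 0\<close> by (intro order_tendstoD(1)) auto
  moreover have "((\<lambda>\<theta>. a^2 - 2 * a * \<theta>) \<longlongrightarrow> a^2 - 2 * a * 0) (at_right 0)"
    by (intro tendsto_intros)
  then have "eventually (\<lambda>\<theta>. 1 < a^2 - 2 * a * \<theta>) (at_right 0)"
    using \<open>1 < a^2\<close> by (intro order_tendstoD(1)) auto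
  ultimately show ?thesis
    using eventually_at_right_less[of 0] unfolding c_def by eventually_elim auto
qed

lemma ereal_le_Liminf_if_eventually:
  assumes "\<And>e. e > 0 \<Longrightarrow> eventually (\<lambda>x. b - e \<le> f x) F"
  shows "ereal b \<le> Liminf F (\<lambda>x. ereal (f x))"
  unfolding le_Liminf_iff
proof (intro allI impI)
  fix y assume "y < ereal b"
  show "eventually (\<lambda>x. y < ereal (f x)) F"
  proof (cases y)
    case (real r)
    with \<open>y < ereal b\<close> have "0 < (b - r) / 2"
      by simp
    from assms[OF this] show ?thesis
    proof eventually_elim
      case (elim x)
      then show ?case
        using real \<open>y < ereal b\<close> by (simp add: field_simps)
    qed
  qed (use \<open>y < ereal b\<close> in simp_all)
qed

section \<open>Transfer to the Gaussian noise process\<close>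

definition deviation_rate :: "'w measure \<Rightarrow> (nat \<Rightarrow> 'w \<Rightarrow> real) \<Rightarrow> real \<Rightarrow> nat \<Rightarrow> real \<Rightarrow> real \<Rightarrow> real" where
  "deviation_rate M Z \<epsilon> n a \<eta> =
     - (1 / real n) * ln (measure M {w \<in> space M. \<eta> < \<epsilon> * (a_ml n (\<lambda>i. ar_proc a Z i w) - a)})"

lemma P_plus_eq_deviation_rate: "P_plus M Z n a \<eta> = deviation_rate M Z 1 n a \<eta>"
  by (simp add: P_plus_def deviation_rate_def)

lemma P_minus_eq_deviation_rate: "P_minus M Z n a \<eta> = deviation_rate M Z (-1) n a \<eta>"
proof -
  have "{w \<in> space M. a_ml n (\<lambda>i. ar_proc a Z i w) - a < - \<eta>}
      = {w \<in> space M. \<eta> < -1 * (a_ml n (\<lambda>i. ar_proc a Z i w) - a)}"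
    by auto
  then show ?thesis
    by (simp only: P_minus_def deviation_rate_def)
qed

locale gaussian_noise = prob_space M
  for M :: "'w measure" and Z :: "nat \<Rightarrow> 'w \<Rightarrow> real" and \<sigma> :: real +
  assumes sigma_pos: "\<sigma> > 0"
    and indep_noise: "indep_vars (\<lambda>_. borel) Z {1..}"
    and normal_noise: "\<And>i. i \<ge> 1 \<Longrightarrow> distributed M lborel (Z i) (\<lambda>x. ennreal (normal_density 0 \<sigma> x))"
begin

lemma distr_noise_vector:
  assumes "n \<ge> 1"
  shows "distr M (PiM {1..n} (\<lambda>_. borel)) (\<lambda>w. \<lambda>i\<in>{1..n}. Z i w) = PiM {1..n} (\<lambda>_. normal_measure \<sigma>)"
proof -
  have rv: "random_variable borel (Z i)" if "i \<in> {1..n}" for i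
    using normal_noise[of i] that unfolding distributed_def by auto
  have "indep_vars (\<lambda>_. borel) Z {1..n}"
    using indep_noise by (rule indep_vars_subset) auto
  moreover have "{1..n} \<noteq> {}"
    using assms by simp
  ultimately have "distr M (PiM {1..n} (\<lambda>_. borel)) (\<lambda>w. \<lambda>i\<in>{1..n}. Z i w) = PiM {1..n} (\<lambda>i. distr M borel (Z i))"
    using indep_vars_iff_distr_eq_PiM'[where M'="\<lambda>_. borel" and X=Z] rv by blast
  also have "\<dots> = PiM {1..n} (\<lambda>_. normal_measure \<sigma>)"
  proof (rule PiM_cong)
    fix i assume "i \<in> {1..n}"
    then have "distr M lborel (Z i) = normal_measure \<sigma>"
      using normal_noise[of i] unfolding distributed_def normal_measure_def by auto
    then show "distr M borel (Z i) = normal_measure \<sigma>"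
      by (metis distr_cong sets_lborel)
  qed simp
  finally show ?thesis .
qed

lemma measure_noise_vector:
  assumes "n \<ge> 1" and E: "E \<in> sets (PiM {1..n} (\<lambda>_. normal_measure \<sigma>))"
  shows "measure M {w \<in> space M. (\<lambda>i\<in>{1..n}. Z i w) \<in> E} = measure (PiM {1..n} (\<lambda>_. normal_measure \<sigma>)) E"
proof -
  have X: "(\<lambda>w. \<lambda>i\<in>{1..n}. Z i w) \<in> measurable M (PiM {1..n} (\<lambda>_. borel))"
    using normal_noise unfolding distributed_def by (intro measurable_restrict) auto
  have "E \<in> sets (PiM {1..n} (\<lambda>_. borel))"
    using E by (subst sets_PiM_cong[of _ _ _ "\<lambda>_. normal_measure \<sigma>"]) auto
  then have "measure (distr M (PiM {1..n} (\<lambda>_. borel)) (\<lambda>w. \<lambda>i\<in>{1..n}. Z i w)) E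
      = measure M ((\<lambda>w. \<lambda>i\<in>{1..n}. Z i w) -` E \<inter> space M)"
    by (rule measure_distr[OF X])
  then show ?thesis
    using distr_noise_vector[OF \<open>n \<ge> 1\<close>] by (simp add: vimage_def Int_def conj_commute)
qed

lemma deviation_rate_eq_product:
  assumes "n \<ge> 1"
  defines "P \<equiv> PiM {1..n} (\<lambda>_. normal_measure \<sigma>)"
  shows "deviation_rate M Z \<epsilon> n a \<eta>
       = - (1 / real n) * ln (measure P {x \<in> space P. \<eta> < \<epsilon> * (a_ml n (ar_seq a x) - a)})"
proof -
  define E where "E = {x \<in> space P. \<eta> < \<epsilon> * (a_ml n (ar_seq a x) - a)}"
  have "E \<in> sets P"
    unfolding E_def P_def by measurable
  have "{w \<in> space M. \<eta> < \<epsilon> * (a_ml n (\<lambda>i. ar_proc a Z i w) - a)} = {w \<in> space M. (\<lambda>i\<in>{1..n}. Z i w) \<in> E}"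
    by (auto simp: E_def P_def space_PiM a_ml_ar_proc)
  then show ?thesis
    using measure_noise_vector[OF \<open>n \<ge> 1\<close> \<open>E \<in> sets P\<close>[unfolded P_def]]
    by (simp add: deviation_rate_def E_def P_def)
qed

lemma deviation_rate_ge:
  fixes \<epsilon> :: real
  assumes "a > 1" and "\<eta> > 0" and "n \<ge> 2" and "s > 0" and "\<epsilon> \<in> {-1, 1}"
    and "\<And>l. l \<in> {1..n-1} \<Longrightarrow> 2 * \<sigma>^2 * rec_seq a (\<epsilon> * a) \<sigma> \<eta> s (l - 1) < 1"
  shows "1 / (2 * real n) * (\<Sum>l=1..n-1. ln (1 - 2 * \<sigma>^2 * rec_seq a (\<epsilon> * a) \<sigma> \<eta> s (l - 1)))
       \<le> deviation_rate M Z \<epsilon> n a \<eta>"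
proof -
  have "n \<ge> 1" "real n > 0"
    using \<open>n \<ge> 2\<close> by auto
  with neg_ln_measure_deviation_ge[OF sigma_pos assms] show ?thesis
    unfolding deviation_rate_eq_product[OF \<open>n \<ge> 1\<close>] by (simp add: field_simps)
qed

lemma P_plus_ge:
  assumes "a > 1" and "\<eta> > 0" and "n \<ge> 2" and "s > 0"
    and "\<forall>l\<in>{1..n}. alpha a \<sigma> \<eta> s l < 1 / (2 * \<sigma>^2)"
  shows "1 / (2 * real n) * (\<Sum>l=1..n-1. ln (1 - 2 * \<sigma>^2 * alpha a \<sigma> \<eta> s l)) \<le> P_plus M Z n a \<eta>"
proof -
  have "2 * \<sigma>^2 * rec_seq a (1 * a) \<sigma> \<eta> s (l - 1) < 1" if "l \<in> {1..n-1}" for l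
    using assms(5) that sigma_pos by (auto simp: alpha_def less_divide_eq mult.commute)
  then show ?thesis
    using deviation_rate_ge[OF assms(1-4), of 1] by (simp add: P_plus_eq_deviation_rate alpha_def)
qed

lemma P_minus_ge:
  assumes "a > 1" and "\<eta> > 0" and "n \<ge> 2" and "s > 0"
    and "\<forall>l\<in>{1..n}. beta a \<sigma> \<eta> s l < 1 / (2 * \<sigma>^2)"
  shows "1 / (2 * real n) * (\<Sum>l=1..n-1. ln (1 - 2 * \<sigma>^2 * beta a \<sigma> \<eta> s l)) \<le> P_minus M Z n a \<eta>"
proof -
  have "2 * \<sigma>^2 * rec_seq a (-1 * a) \<sigma> \<eta> s (l - 1) < 1" if "l \<in> {1..n-1}" for l
    using assms(5) that sigma_pos by (auto simp: beta_def less_divide_eq mult.commute)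
  then show ?thesis
    using deviation_rate_ge[OF assms(1-4), of "-1"] by (simp add: P_minus_eq_deviation_rate beta_def)
qed

lemma deviation_rate_ge_explicit:
  fixes \<epsilon> \<theta> :: real and K :: nat
  assumes "a > 1" and "\<epsilon> \<in> {-1, 1}" and "n \<ge> 2" and "\<theta> > 0" and "1 < a^2 - 2 * a * \<theta>"
    and "1 / sqrt (real n) \<le> \<eta>" and "1 / sqrt (real n) \<le> \<theta>"
    and "real n \<le> \<theta> * (a^2 - 2 * a * \<theta>)^K"
  shows "real (n - 1 - K) * ln (1 + 1 / (\<theta> + 1 / (a^2 - 2 * a * \<theta> - 1))) / (2 * real n)
       \<le> deviation_rate M Z \<epsilon> n a \<eta>"
proof -
  define s where "s = min \<eta> \<theta> / \<sigma>^2"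
  have "0 < 1 / sqrt (real n)"
    using \<open>n \<ge> 2\<close> by simp
  then have "\<eta> > 0"
    using assms(6) by linarith
  then have "s > 0"
    using \<open>\<theta> > 0\<close> sigma_pos by (simp add: s_def)
  have "n \<ge> 1"
    using \<open>n \<ge> 2\<close> by simp
  note rec = sum_ln_rec_seq_ge[OF sigma_pos assms(1,2) \<open>n \<ge> 1\<close> assms(5,4,6-8), folded s_def]
  have neg: "\<sigma>^2 * rec_seq a (\<epsilon> * a) \<sigma> \<eta> s k < 0" for k
    using rec(1)[of k] sigma_pos by (intro mult_pos_neg) auto
  have "2 * \<sigma>^2 * rec_seq a (\<epsilon> * a) \<sigma> \<eta> s k < 1" for k
    using neg[of k] by linarith
  then have "1 / (2 * real n) * (\<Sum>l=1..n-1. ln (1 - 2 * \<sigma>^2 * rec_seq a (\<epsilon> * a) \<sigma> \<eta> s (l - 1)))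
      \<le> deviation_rate M Z \<epsilon> n a \<eta>"
    using deviation_rate_ge[OF \<open>a > 1\<close> \<open>\<eta> > 0\<close> \<open>n \<ge> 2\<close> \<open>s > 0\<close> \<open>\<epsilon> \<in> {-1, 1}\<close>] by simp
  moreover have "real (n - 1 - K) * ln (1 + 1 / (\<theta> + 1 / (a^2 - 2 * a * \<theta> - 1))) / (2 * real n)
      \<le> (\<Sum>l=1..n-1. ln (1 - 2 * \<sigma>^2 * rec_seq a (\<epsilon> * a) \<sigma> \<eta> s (l - 1))) / (2 * real n)"
    using rec(2) \<open>n \<ge> 2\<close> by (intro divide_right_mono) auto
  ultimately show ?thesis
    by simp
qed

lemma deviation_rate_liminf_ge:
  fixes \<epsilon> :: real and \<eta> :: "nat \<Rightarrow> real"
  assumes "a > 1" and "\<epsilon> \<in> {-1, 1}" and \<eta>_pos: "\<And>n. \<eta> n > 0"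
    and \<eta>_lim: "filterlim (\<lambda>n. sqrt (real n) * \<eta> n) at_top sequentially"
  shows "ereal (ln a) \<le> liminf (\<lambda>n. ereal (deviation_rate M Z \<epsilon> n a (\<eta> n)))"
proof (rule ereal_le_Liminf_if_eventually)
  fix e :: real assume "e > 0"
  define c where "c \<theta> = ln (1 + 1 / (\<theta> + 1 / (a^2 - 2 * a * \<theta> - 1)))" for \<theta>
  obtain \<theta> where "0 < \<theta>" and A\<^sub>0: "1 < a^2 - 2 * a * \<theta>" and "2 * ln a - e < c \<theta>"
    using eventually_happens'[OF trivial_limit_at_right_real eventually_at_right_0_ln_gt[OF \<open>a > 1\<close> \<open>e > 0\<close>]]
    unfolding c_def by blast
  define K where "K n = nat \<lceil>ln (real n / \<theta>) / ln (a^2 - 2 * a * \<theta>)\<rceil>" for n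
  have "0 \<le> c \<theta>"
    unfolding c_def using \<open>0 < \<theta>\<close> A\<^sub>0 by simp
  have "(\<lambda>n. c \<theta> / 2 * ((1 + real (K n)) / real n)) \<longlonglongrightarrow> c \<theta> / 2 * 0"
    unfolding K_def using \<open>0 < \<theta>\<close> A\<^sub>0
    by (intro tendsto_mult tendsto_const nat_ceiling_log_over_n_tendsto_zero) auto
  then have "eventually (\<lambda>n. c \<theta> / 2 * ((1 + real (K n)) / real n) < e / 2) sequentially"
    using \<open>e > 0\<close> by (intro order_tendstoD(2)) auto
  moreover have "(\<lambda>n. 1 / sqrt (real n)) \<longlonglongrightarrow> 0"
    by real_asymp
  then have "eventually (\<lambda>n. 1 / sqrt (real n) < \<theta>) sequentially"
    using \<open>0 < \<theta>\<close> by (intro order_tendstoD(2)) auto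
  moreover have "eventually (\<lambda>n. 1 \<le> sqrt (real n) * \<eta> n) sequentially"
    using \<eta>_lim by (simp add: filterlim_at_top)
  ultimately show "eventually (\<lambda>n. ln a - e \<le> deviation_rate M Z \<epsilon> n a (\<eta> n)) sequentially"
    using eventually_ge_at_top[of "2::nat"]
  proof eventually_elim
    case (elim n)
    then have "n \<ge> 2" "real n > 0"
      by auto
    then have "1 / sqrt (real n) \<le> \<eta> n"
      using elim(3) by (simp add: divide_le_eq mult.commute)
    moreover have "real n \<le> \<theta> * (a^2 - 2 * a * \<theta>)^K n"
      unfolding K_def using \<open>0 < \<theta>\<close> A\<^sub>0 \<open>n \<ge> 2\<close> by (intro real_le_mult_power_nat_ceiling_log) auto
    ultimately have "real (n - 1 - K n) * c \<theta> / (2 * real n) \<le> deviation_rate M Z \<epsilon> n a (\<eta> n)"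
      unfolding c_def using elim(2) \<eta>_pos \<open>0 < \<theta>\<close> A\<^sub>0 \<open>a > 1\<close> \<open>\<epsilon> \<in> {-1, 1}\<close> \<open>n \<ge> 2\<close>
      by (intro deviation_rate_ge_explicit) auto
    moreover have "c \<theta> / 2 - c \<theta> / 2 * ((1 + real (K n)) / real n) = (real n - 1 - real (K n)) * c \<theta> / (2 * real n)"
      using \<open>real n > 0\<close> by (simp add: field_simps)
    moreover have "\<dots> \<le> real (n - 1 - K n) * c \<theta> / (2 * real n)"
      using \<open>0 \<le> c \<theta>\<close> by (intro divide_right_mono mult_right_mono) auto
    ultimately show ?case
      using elim(1) \<open>2 * ln a - e < c \<theta>\<close> by linarith
  qed
qed

end

theorem theorem3:
  fixes M :: "'w measure" and Z :: "nat \<Rightarrow> 'w \<Rightarrow> real"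
    and \<sigma> a :: real and \<eta> :: "nat \<Rightarrow> real"
  assumes "prob_space M"
    and "\<sigma> > 0" and "a > 1"
    and "prob_space.indep_vars M (\<lambda>_. borel) Z {1..}"
    and "\<And>i. i \<ge> 1 \<Longrightarrow> distributed M lborel (Z i) (\<lambda>x. ennreal (normal_density 0 \<sigma> x))"
    and "\<And>n. \<eta> n > 0"
    and "filterlim (\<lambda>n. sqrt (real n) * \<eta> n) at_top sequentially"
  shows "(\<forall>n\<ge>2.
           ereal (P_plus M Z n a (\<eta> n)) \<ge>
             (SUP s\<in>{s. s > 0 \<and> (\<forall>l\<in>{1..n}. alpha a \<sigma> (\<eta> n) s l < 1 / (2 * \<sigma>^2))}.
                ereal (1 / (2 * real n) * (\<Sum>l=1..n-1. ln (1 - 2 * \<sigma>^2 * alpha a \<sigma> (\<eta> n) s l))))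
         \<and> ereal (P_minus M Z n a (\<eta> n)) \<ge>
             (SUP s\<in>{s. s > 0 \<and> (\<forall>l\<in>{1..n}. beta a \<sigma> (\<eta> n) s l < 1 / (2 * \<sigma>^2))}.
                ereal (1 / (2 * real n) * (\<Sum>l=1..n-1. ln (1 - 2 * \<sigma>^2 * beta a \<sigma> (\<eta> n) s l)))))
       \<and> liminf (\<lambda>n. ereal (P_plus M Z n a (\<eta> n))) \<ge> ereal (ln a)
       \<and> liminf (\<lambda>n. ereal (P_minus M Z n a (\<eta> n))) \<ge> ereal (ln a)"
proof -
  interpret gaussian_noise M Z \<sigma>
    using assms(1,2,4,5) by (simp add: gaussian_noise_def gaussian_noise_axioms_def)
  have "ereal (P_plus M Z n a (\<eta> n)) \<ge>
          (SUP s\<in>{s. s > 0 \<and> (\<forall>l\<in>{1..n}. alpha a \<sigma> (\<eta> n) s l < 1 / (2 * \<sigma>^2))}.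
             ereal (1 / (2 * real n) * (\<Sum>l=1..n-1. ln (1 - 2 * \<sigma>^2 * alpha a \<sigma> (\<eta> n) s l))))"
    if "n \<ge> 2" for n
    using P_plus_ge[OF \<open>a > 1\<close> assms(6) that] by (auto intro: SUP_least)
  moreover have "ereal (P_minus M Z n a (\<eta> n)) \<ge>
          (SUP s\<in>{s. s > 0 \<and> (\<forall>l\<in>{1..n}. beta a \<sigma> (\<eta> n) s l < 1 / (2 * \<sigma>^2))}.
             ereal (1 / (2 * real n) * (\<Sum>l=1..n-1. ln (1 - 2 * \<sigma>^2 * beta a \<sigma> (\<eta> n) s l))))"
    if "n \<ge> 2" for n
    using P_minus_ge[OF \<open>a > 1\<close> assms(6) that] by (auto intro: SUP_least)
  moreover have "liminf (\<lambda>n. ereal (P_plus M Z n a (\<eta> n))) \<ge> ereal (ln a)"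
    using deviation_rate_liminf_ge[OF \<open>a > 1\<close> _ assms(6,7), of 1] by (simp add: P_plus_eq_deviation_rate)
  moreover have "liminf (\<lambda>n. ereal (P_minus M Z n a (\<eta> n))) \<ge> ereal (ln a)"
    using deviation_rate_liminf_ge[OF \<open>a > 1\<close> _ assms(6,7), of "-1"] by (simp add: P_minus_eq_deviation_rate)
  ultimately show ?thesis
    by blast
qed

end
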